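(* Let $\mathcal L:\sum_{i=1}^kc_ix_i=0$ with $k\ge3$, $c_i\in\mathbb Z\setminus\{0\}$, let $I\subsetneq[k]$ with $|I|\ge3$ and $\sum_{i\in I}c_i=0$, and $J=[k]\setminus I$. Let $p>\max_i|c_i|$ be prime, and let $A\subseteq\mathbb F_p$ be $\mathcal L$-solution-free such that $A^I$ contains at least $\delta p^{|I|-1}$ solutions of $\sum_{i\in I}c_ix_i=0$, for some $\delta\in(0,1]$. Set $\nu=\delta/6$, $L=\{\xi\in\mathbb F_p:|\widehat{1_A}(\xi)|\ge\nu\}$, fix $s\in I$, $\Gamma=\{\eta\in\mathbb F_p:c_s\eta\in L\}$, $D=\sum_{i\in J}|c_i|$, $\rho=\frac{\delta^3}{216\pi D}$, and $B=\{x\in\mathbb F_p:\|\xi x\|_\tau\le\rho\ \forall\xi\in\Gamma\}$. If $p>6k^2\delta^{-1}$, then $|A\cap B|<k$.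
   Context: $\widehat{1_A}(\xi)=\frac1p\sum_{x\in A}e^{-2\pi i x\xi/p}$. For $x\in\mathbb F_p$ (identified with $\{0,\dots,p-1\}$), $\|x\|_\tau$ is the distance from $x/p$ to the nearest integer. $\mathcal L$-solution-free means no solution in $A^k$ with pairwise distinct entries. *)

theory Defs
  imports "HOL-Analysis.Analysis"
begin

text \<open>Elements of F_p are identified with {0..<p} (as naturals).
  Equations are indexed by {..<k} (i.e. [k] shifted to 0-based).\<close>

definition fourier_ind :: "nat \<Rightarrow> nat set \<Rightarrow> nat \<Rightarrow> complex" where
  "fourier_ind p A \<xi> = (1 / of_nat p) *
     (\<Sum>x\<in>A. cis (- 2 * pi * real x * real \<xi> / real p))"

definition tau_norm :: "nat \<Rightarrow> nat \<Rightarrow> real" where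
  "tau_norm p y = \<bar>real y / real p - of_int (round (real y / real p))\<bar>"

definition solution_free :: "nat \<Rightarrow> nat \<Rightarrow> (nat \<Rightarrow> int) \<Rightarrow> nat set \<Rightarrow> bool" where
  "solution_free p k c A \<longleftrightarrow>
     \<not> (\<exists>x. (\<forall>i<k. x i \<in> A) \<and> inj_on x {..<k} \<and>
            (\<Sum>i<k. c i * int (x i)) mod int p = 0)"

definition num_solutions :: "nat \<Rightarrow> nat set \<Rightarrow> (nat \<Rightarrow> int) \<Rightarrow> nat set \<Rightarrow> nat" where
  "num_solutions p I c A =
     card {x \<in> Pi\<^sub>E I (\<lambda>_. A). (\<Sum>i\<in>I. c i * int (x i)) mod int p = 0}"

end

theory Submission
  imports Defs
begin

(* Suppose A \<inter> B had k elements.  Fill the coordinates in J with distinct b_j \<in> A \<inter> B and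
   put t = \<Sum>_J c_j b_j.  With e(m) = exp(2\<pi>im/p), Fourier expansion writes the number N(t) of
   x \<in> A^I with \<Sum>_I c_i x_i + t = 0 as p^(|I|-1) \<Sum>_\<xi> e(-\<xi>t) \<Prod>_I \hat 1_A(c_i \<xi>), so N(0) - N(t)
   is the same sum weighted by 1 - e(-\<xi>t).  For \<xi> \<in> \<Gamma> every b_j lies in the Bohr set B, so
   this weight is at most 2\<pi>D\<rho> \<le> \<delta>/3; for \<xi> \<notin> \<Gamma> the factor \hat 1_A(c_s \<xi>) is below
   \<nu> = \<delta>/6.  Two further factors are summed by AM-GM and Parseval, so N(t) \<ge> (2\<delta>/3) p^(|I|-1).
   At most k^2 p^(|I|-2) < (\<delta>/6) p^(|I|-1) of these solutions have a coordinate equal to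
   another one or to some b_j, so one of them extends to a solution of L with distinct
   entries in A. *)

definition add_char :: "nat \<Rightarrow> int \<Rightarrow> complex" where
  "add_char p m = cis (2 * pi * of_int m / real p)"

definition fourier_ind_int :: "nat \<Rightarrow> nat set \<Rightarrow> int \<Rightarrow> complex" where
  "fourier_ind_int p A m = (1 / of_nat p) * (\<Sum>a\<in>A. add_char p (- (m * int a)))"

definition dist_nearest_int :: "real \<Rightarrow> real" where
  "dist_nearest_int r = \<bar>r - of_int (round r)\<bar>"

definition solutions :: "nat \<Rightarrow> nat set \<Rightarrow> (nat \<Rightarrow> int) \<Rightarrow> nat set \<Rightarrow> int \<Rightarrow> (nat \<Rightarrow> nat) set" where
  "solutions p I c A t = {x \<in> Pi\<^sub>E I (\<lambda>_. A). ((\<Sum>i\<in>I. c i * int (x i)) + t) mod int p = 0}"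

lemma prod_le_prod_subset:
  fixes f :: "'a \<Rightarrow> real"
  assumes "finite I" "J \<subseteq> I" "\<And>i. i \<in> I \<Longrightarrow> 0 \<le> f i \<and> f i \<le> 1"
  shows "(\<Prod>i\<in>I. f i) \<le> (\<Prod>i\<in>J. f i)"
proof -
  have "(\<Prod>i\<in>I. f i) = (\<Prod>i\<in>I - J. f i) * (\<Prod>i\<in>J. f i)"
    using prod.subset_diff[OF assms(2,1)] by simp
  also have "\<dots> \<le> 1 * (\<Prod>i\<in>J. f i)"
    using assms by (intro mult_right_mono prod_le_1 prod_nonneg) auto
  finally show ?thesis by simp
qed

lemma add_char_add: "add_char p (a + b) = add_char p a * add_char p b"
  unfolding add_char_def cis_mult by (simp add: algebra_simps add_divide_distrib)

lemma add_char_0 [simp]: "add_char p 0 = 1"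
  unfolding add_char_def by simp

lemma norm_add_char [simp]: "norm (add_char p m) = 1"
  unfolding add_char_def by simp

lemma cnj_add_char: "cnj (add_char p m) = add_char p (- m)"
  unfolding add_char_def cis_cnj by simp

lemma add_char_sum: "finite S \<Longrightarrow> add_char p (\<Sum>i\<in>S. f i) = (\<Prod>i\<in>S. add_char p (f i))"
  by (induction S rule: finite_induct) (auto simp: add_char_add)

lemma add_char_power: "add_char p m ^ n = add_char p (int n * m)"
  by (simp add: add_char_def Complex.DeMoivre algebra_simps)

lemma add_char_eq_1_iff:
  assumes "p > 0"
  shows "add_char p m = 1 \<longleftrightarrow> int p dvd m"
proof
  assume "add_char p m = 1"
  then obtain n :: int where "2 * pi * of_int m / real p = of_int (2 * n) * pi"
    unfolding add_char_def cis_conv_exp exp_eq_1 by auto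
  then have "real_of_int m = real p * of_int n"
    using assms by (simp add: field_simps)
  then have "m = int p * n"
    by (metis of_int_eq_iff of_int_mult of_int_of_nat_eq)
  then show "int p dvd m" by simp
next
  assume "int p dvd m"
  then obtain q where "m = int p * q" ..
  moreover have "2 * pi * of_int (int p * q) / real p = 2 * pi * of_int q"
    using assms by simp
  ultimately show "add_char p m = 1"
    unfolding add_char_def by simp
qed

lemma add_char_mod:
  assumes "p > 0"
  shows "add_char p (m mod int p) = add_char p m"
proof -
  have "add_char p m = add_char p (m mod int p) * add_char p (int p * (m div int p))"
    by (simp flip: add_char_add)
  then show ?thesis using add_char_eq_1_iff[OF assms] by simp
qed

lemma add_char_cong:
  assumes "p > 0" and "a mod int p = b mod int p"
  shows "add_char p a = add_char p b"
  by (metis add_char_mod assms)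

lemma sum_add_char:
  assumes "p > 0"
  shows "(\<Sum>\<xi><p. add_char p (int \<xi> * m)) = (if int p dvd m then of_nat p else 0)"
proof (cases "int p dvd m")
  case True
  then have "add_char p (int \<xi> * m) = 1" for \<xi>
    using add_char_eq_1_iff[OF assms] by simp
  then show ?thesis using True by simp
next
  case False
  have "(\<Sum>\<xi><p. add_char p (int \<xi> * m)) = (\<Sum>\<xi><p. add_char p m ^ \<xi>)"
    by (simp add: add_char_power)
  also have "\<dots> = 0"
  proof -
    have "add_char p m \<noteq> 1" "add_char p m ^ p = 1"
      using False add_char_eq_1_iff[OF assms] by (simp_all add: add_char_power)
    then show ?thesis by (simp add: sum_gp_strict)
  qed
  finally show ?thesis using False by simp
qed

lemma dist_nearest_int_le: "dist_nearest_int r \<le> \<bar>r - of_int m\<bar>"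
  unfolding dist_nearest_int_def by (rule round_diff_minimal)

lemma dist_nearest_int_add_int: "dist_nearest_int (r + of_int n) = dist_nearest_int r"
proof (rule antisym)
  show "dist_nearest_int (r + of_int n) \<le> dist_nearest_int r"
    using dist_nearest_int_le[of "r + of_int n" "round r + n"]
    unfolding dist_nearest_int_def by simp
  show "dist_nearest_int r \<le> dist_nearest_int (r + of_int n)"
    using dist_nearest_int_le[of r "round (r + of_int n) - n"]
    unfolding dist_nearest_int_def by (simp add: algebra_simps)
qed

lemma dist_nearest_int_add: "dist_nearest_int (r + s) \<le> dist_nearest_int r + dist_nearest_int s"
  using dist_nearest_int_le[of "r + s" "round r + round s"] unfolding dist_nearest_int_def by simp

lemma dist_nearest_int_sum:
  "finite S \<Longrightarrow> dist_nearest_int (\<Sum>i\<in>S. f i) \<le> (\<Sum>i\<in>S. dist_nearest_int (f i))"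
proof (induction S rule: finite_induct)
  case empty
  then show ?case by (simp add: dist_nearest_int_def)
next
  case (insert x S)
  then show ?case using dist_nearest_int_add[of "f x" "sum f S"] by simp
qed

lemma dist_nearest_int_mult_int: "dist_nearest_int (of_int n * r) \<le> \<bar>of_int n\<bar> * dist_nearest_int r"
proof -
  have "dist_nearest_int (of_int n * r) \<le> \<bar>of_int n * r - of_int (n * round r)\<bar>"
    by (rule dist_nearest_int_le)
  also have "\<dots> = \<bar>of_int n\<bar> * dist_nearest_int r"
    unfolding dist_nearest_int_def by (simp add: abs_mult[symmetric] algebra_simps)
  finally show ?thesis .
qed

lemma tau_norm_eq_dist_nearest_int: "tau_norm p y = dist_nearest_int (real y / real p)"
  unfolding tau_norm_def dist_nearest_int_def ..

lemma tau_norm_mod_eq_dist_nearest_int: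
  assumes "p > 0"
  shows "tau_norm p ((a * b) mod p) = dist_nearest_int (real a * real b / real p)"
proof -
  have "real ((a * b) mod p) + real p * real ((a * b) div p) = real a * real b"
    by (metis mod_mult_div_eq of_nat_add of_nat_mult)
  then have "real ((a * b) mod p) / real p
      = real a * real b / real p + of_int (- int ((a * b) div p))"
    using assms by (simp add: field_simps)
  then show ?thesis
    by (simp only: tau_norm_eq_dist_nearest_int dist_nearest_int_add_int)
qed

lemma norm_one_minus_cis: "norm (1 - cis t) \<le> \<bar>t\<bar>"
proof -
  have "(norm (1 - cis t))\<^sup>2 = 2 - 2 * cos t"
    using sin_cos_squared_add[of t] by (simp add: cmod_def power2_eq_square algebra_simps)
  also have "\<dots> = (2 * sin (t / 2))\<^sup>2"
    using cos_double_sin[of "t / 2"] by (simp add: power2_eq_square)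
  also have "\<dots> \<le> t\<^sup>2"
    unfolding abs_le_square_iff[symmetric] using abs_sin_x_le_abs_x[of "t / 2"]
    by (simp add: abs_mult)
  finally show ?thesis by (simp add: abs_le_square_iff[symmetric])
qed

lemma norm_one_minus_add_char:
  assumes "p > 0"
  shows "norm (1 - add_char p m) \<le> 2 * pi * dist_nearest_int (of_int m / real p)"
proof -
  define r where "r = of_int m / real p"
  have "add_char p m = cis (2 * pi * (r - of_int (round r))) * cis (2 * pi * of_int (round r))"
    unfolding add_char_def r_def by (simp add: cis_mult algebra_simps)
  also have "\<dots> = cis (2 * pi * (r - of_int (round r)))"
    by simp
  finally have "norm (1 - add_char p m) \<le> \<bar>2 * pi * (r - of_int (round r))\<bar>"
    using norm_one_minus_cis by simp
  then show ?thesis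
    unfolding dist_nearest_int_def r_def by (simp add: abs_mult)
qed

lemma norm_one_minus_add_char_uminus: "norm (1 - add_char p (- m)) = norm (1 - add_char p m)"
  by (metis cnj_add_char complex_cnj_diff complex_cnj_one complex_mod_cnj)

lemma norm_one_minus_add_char_Bohr_le:
  assumes "p > 0" "finite J" "\<And>j. j \<in> J \<Longrightarrow> tau_norm p ((\<xi> * b j) mod p) \<le> \<rho>"
  shows "norm (1 - add_char p (int \<xi> * (\<Sum>j\<in>J. c j * int (b j))))
    \<le> 2 * pi * real_of_int (\<Sum>j\<in>J. \<bar>c j\<bar>) * \<rho>"
proof -
  have "of_int (int \<xi> * (\<Sum>j\<in>J. c j * int (b j))) / real p
      = (\<Sum>j\<in>J. of_int (c j) * (real \<xi> * real (b j) / real p))"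
    by (simp add: sum_distrib_left sum_divide_distrib algebra_simps)
  then have "dist_nearest_int (of_int (int \<xi> * (\<Sum>j\<in>J. c j * int (b j))) / real p)
      \<le> (\<Sum>j\<in>J. dist_nearest_int (of_int (c j) * (real \<xi> * real (b j) / real p)))"
    using dist_nearest_int_sum[OF assms(2)] by simp
  also have "\<dots> \<le> (\<Sum>j\<in>J. \<bar>of_int (c j)\<bar> * \<rho>)"
  proof (rule sum_mono)
    fix j assume "j \<in> J"
    then have "dist_nearest_int (real \<xi> * real (b j) / real p) \<le> \<rho>"
      using assms(3) by (simp add: tau_norm_mod_eq_dist_nearest_int[OF assms(1)])
    then show "dist_nearest_int (of_int (c j) * (real \<xi> * real (b j) / real p))
        \<le> \<bar>of_int (c j)\<bar> * \<rho>"
      by (intro order_trans[OF dist_nearest_int_mult_int] mult_left_mono) auto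
  qed
  also have "\<dots> = real_of_int (\<Sum>j\<in>J. \<bar>c j\<bar>) * \<rho>"
    by (simp add: sum_distrib_right)
  finally have "2 * pi * dist_nearest_int (of_int (int \<xi> * (\<Sum>j\<in>J. c j * int (b j))) / real p)
      \<le> 2 * pi * real_of_int (\<Sum>j\<in>J. \<bar>c j\<bar>) * \<rho>"
    by simp
  then show ?thesis
    using norm_one_minus_add_char[OF assms(1)] by (rule order_trans[rotated])
qed

lemma fourier_ind_eq_fourier_ind_int: "fourier_ind p A \<xi> = fourier_ind_int p A (int \<xi>)"
  unfolding fourier_ind_def fourier_ind_int_def add_char_def by (simp add: algebra_simps)

lemma fourier_ind_int_mod:
  assumes "p > 0"
  shows "fourier_ind_int p A (m mod int p) = fourier_ind_int p A m"
  unfolding fourier_ind_int_def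
  by (intro arg_cong[where f = "\<lambda>x. _ * x"] sum.cong refl add_char_cong[OF assms])
     (metis mod_minus_eq mod_mult_left_eq)

lemma norm_fourier_ind_int_le:
  assumes "A \<subseteq> {..<p}"
  shows "norm (fourier_ind_int p A m) \<le> 1"
proof -
  have "norm (\<Sum>a\<in>A. add_char p (- (m * int a))) \<le> real (card A)"
    using norm_sum[of "\<lambda>a. add_char p (- (m * int a))" A] by simp
  then have "norm (fourier_ind_int p A m) \<le> real (card A) / real p"
    unfolding fourier_ind_int_def by (simp add: norm_mult norm_divide divide_right_mono)
  also have "\<dots> \<le> 1"
    using card_mono[OF _ assms] by (cases "p = 0") (auto simp: divide_le_eq_1)
  finally show ?thesis .
qed

lemma fourier_ind_nat_mod:
  assumes "p > 0"
  shows "fourier_ind p A (nat (m mod int p)) = fourier_ind_int p A m"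
  using assms by (simp add: fourier_ind_eq_fourier_ind_int fourier_ind_int_mod)

lemma card_zeros_mod_eq_sum_add_char:
  assumes "finite P" "p > 0"
  shows "of_nat (card {x\<in>P. f x mod int p = 0}) * of_nat p
         = (\<Sum>x\<in>P. \<Sum>\<xi><p. add_char p (- (int \<xi> * f x)))"
proof -
  have "(\<Sum>x\<in>P. \<Sum>\<xi><p. add_char p (- (int \<xi> * f x)))
      = (\<Sum>x\<in>P. if int p dvd f x then of_nat p else 0)"
    using sum_add_char[OF assms(2), of "- f _"] by simp
  also have "\<dots> = of_nat (card {x\<in>P. f x mod int p = 0}) * of_nat p"
    using assms(1) by (simp add: sum.If_cases dvd_eq_mod_eq_0 Int_def conj_commute)
  finally show ?thesis by simp
qed

lemma card_solutions_eq_sum_fourier: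
  assumes "finite I" "finite A" "p > 0"
  shows "of_nat (card (solutions p I c A t)) * of_nat p
    = of_nat p ^ card I
      * (\<Sum>\<xi><p. add_char p (- (int \<xi> * t)) * (\<Prod>i\<in>I. fourier_ind_int p A (c i * int \<xi>)))"
proof -
  have fin: "finite (Pi\<^sub>E I (\<lambda>_. A))"
    using assms by (simp add: finite_PiE)
  have split: "add_char p (- (int \<xi> * ((\<Sum>i\<in>I. c i * int (x i)) + t)))
      = add_char p (- (int \<xi> * t)) * (\<Prod>i\<in>I. add_char p (- (c i * int \<xi> * int (x i))))" for \<xi> x
  proof -
    have "- (int \<xi> * ((\<Sum>i\<in>I. c i * int (x i)) + t))
        = - (int \<xi> * t) + (\<Sum>i\<in>I. - (c i * int \<xi> * int (x i)))"
      by (simp add: sum_distrib_left sum_negf algebra_simps)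
    then show ?thesis
      by (simp only: add_char_add add_char_sum[OF assms(1)])
  qed
  have "of_nat (card (solutions p I c A t)) * of_nat p
      = (\<Sum>x\<in>Pi\<^sub>E I (\<lambda>_. A). \<Sum>\<xi><p. add_char p (- (int \<xi> * ((\<Sum>i\<in>I. c i * int (x i)) + t))))"
    unfolding solutions_def by (rule card_zeros_mod_eq_sum_add_char[OF fin assms(3)])
  also have "\<dots> = (\<Sum>\<xi><p. add_char p (- (int \<xi> * t))
      * (\<Sum>x\<in>Pi\<^sub>E I (\<lambda>_. A). \<Prod>i\<in>I. add_char p (- (c i * int \<xi> * int (x i)))))"
    unfolding split sum_distrib_left by (rule sum.swap)
  also have "\<dots> = (\<Sum>\<xi><p. add_char p (- (int \<xi> * t))
      * (\<Prod>i\<in>I. \<Sum>a\<in>A. add_char p (- (c i * int \<xi> * int a))))"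
    using assms(1,2) by (simp add: prod_sum_PiE)
  also have "\<dots> = (\<Sum>\<xi><p. add_char p (- (int \<xi> * t))
      * (\<Prod>i\<in>I. of_nat p * fourier_ind_int p A (c i * int \<xi>)))"
    unfolding fourier_ind_int_def using assms(3) by simp
  finally show ?thesis
    by (simp add: prod.distrib sum_distrib_left algebra_simps)
qed

lemma num_solutions_eq_card_solutions: "num_solutions p I c A = card (solutions p I c A 0)"
  unfolding num_solutions_def solutions_def by simp

lemma prime_dvd_mult_diff_iff:
  assumes "prime p" "\<not> int p dvd c" "a < p" "b < p"
  shows "int p dvd c * (int a - int b) \<longleftrightarrow> a = b"
proof
  assume "int p dvd c * (int a - int b)"
  then have "int p dvd int a - int b"
    using assms(1,2) by (simp add: prime_dvd_mult_iff)
  then have "int a mod int p = int b mod int p"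
    by (simp add: mod_eq_dvd_iff)
  then show "a = b"
    using assms(3,4) by simp
qed simp

lemma parseval_fourier_ind_int:
  assumes p: "prime p" and A: "A \<subseteq> {..<p}" and c: "\<not> int p dvd c"
  shows "(\<Sum>\<xi><p. (norm (fourier_ind_int p A (c * int \<xi>)))\<^sup>2) = real (card A) / real p"
proof -
  have p0: "p > 0" using p prime_gt_0_nat by blast
  have finA: "finite A" using A finite_subset by blast
  have sq: "complex_of_real ((norm (fourier_ind_int p A (c * int \<xi>)))\<^sup>2)
      = (1 / (of_nat p)\<^sup>2) * (\<Sum>a\<in>A. \<Sum>b\<in>A. add_char p (- (int \<xi> * (c * (int a - int b)))))" for \<xi>
  proof -
    have "add_char p (- (c * int \<xi> * int a)) * add_char p (c * int \<xi> * int b)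
        = add_char p (- (int \<xi> * (c * (int a - int b))))" for a b
      by (simp add: add_char_add[symmetric] algebra_simps)
    then show ?thesis
      unfolding complex_norm_square fourier_ind_int_def
      by (simp add: cnj_add_char sum_product power2_eq_square)
  qed
  have orth: "(\<Sum>\<xi><p. add_char p (- (int \<xi> * (c * (int a - int b)))))
      = (if a = b then of_nat p else 0)"
    if "a \<in> A" "b \<in> A" for a b
    using sum_add_char[OF p0, of "- (c * (int a - int b))"]
      prime_dvd_mult_diff_iff[OF p c, of a b] that A
    by auto
  have "complex_of_real (\<Sum>\<xi><p. (norm (fourier_ind_int p A (c * int \<xi>)))\<^sup>2)
      = (1 / (of_nat p)\<^sup>2) * (\<Sum>a\<in>A. \<Sum>b\<in>A. \<Sum>\<xi><p. add_char p (- (int \<xi> * (c * (int a - int b)))))"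
    unfolding of_real_sum sq by (simp add: sum_distrib_left sum.swap[of _ "{..<p}"])
  also have "\<dots> = (1 / (of_nat p)\<^sup>2) * (\<Sum>a\<in>A. \<Sum>b\<in>A. if a = b then of_nat p else 0)"
    using orth by simp
  also have "\<dots> = complex_of_real (real (card A) / real p)"
    using finA p0 by (simp add: power2_eq_square)
  finally show ?thesis
    using of_real_eq_iff by blast
qed

lemma sum_norm_mult_fourier_ind_int_le:
  assumes "prime p" "A \<subseteq> {..<p}" "\<not> int p dvd a" "\<not> int p dvd b"
  shows "(\<Sum>\<xi><p. norm (fourier_ind_int p A (a * int \<xi>)) * norm (fourier_ind_int p A (b * int \<xi>)))
    \<le> real (card A) / real p"
proof -
  have amgm: "x * y \<le> (x\<^sup>2 + y\<^sup>2) / 2" for x y :: real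
    using sum_squares_bound[of x y] by simp
  have "(\<Sum>\<xi><p. norm (fourier_ind_int p A (a * int \<xi>)) * norm (fourier_ind_int p A (b * int \<xi>)))
      \<le> (\<Sum>\<xi><p. ((norm (fourier_ind_int p A (a * int \<xi>)))\<^sup>2
          + (norm (fourier_ind_int p A (b * int \<xi>)))\<^sup>2) / 2)"
    using amgm by (intro sum_mono)
  also have "\<dots> = real (card A) / real p"
    using assms by (simp add: sum.distrib sum_divide_distrib[symmetric] parseval_fourier_ind_int)
  finally show ?thesis .
qed

lemma solutions_eq_if_agree_off:
  assumes p: "prime p" and A: "A \<subseteq> {..<p}" and I: "finite I" "r \<in> I" and c: "\<not> int p dvd c r"
    and x: "x \<in> solutions p I c A t" and x': "x' \<in> solutions p I c A t"
    and eq: "\<And>j. j \<in> I - {r} \<Longrightarrow> x j = x' j"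
  shows "x = x'"
proof -
  have xr: "x r < p" "x' r < p"
    using x x' I(2) A unfolding solutions_def by (auto simp: PiE_iff)
  have "(\<Sum>i\<in>I. c i * int (x i)) - (\<Sum>i\<in>I. c i * int (x' i)) = c r * (int (x r) - int (x' r))"
  proof -
    have "(\<Sum>i\<in>I - {r}. c i * int (x i)) = (\<Sum>i\<in>I - {r}. c i * int (x' i))"
      using eq by (intro sum.cong) auto
    then show ?thesis
      by (simp add: sum.remove[OF I] algebra_simps)
  qed
  moreover have "int p dvd ((\<Sum>i\<in>I. c i * int (x i)) + t) - ((\<Sum>i\<in>I. c i * int (x' i)) + t)"
    using x x' unfolding solutions_def by (metis (mono_tags) mem_Collect_eq mod_eq_dvd_iff)
  ultimately have "x r = x' r"
    using prime_dvd_mult_diff_iff[OF p c xr] by simp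
  then show ?thesis
    using x x' eq unfolding solutions_def by (auto intro: PiE_ext)
qed

lemma card_solutions_determined_coord_le:
  assumes p: "prime p" and A: "A \<subseteq> {..<p}" and I: "finite I" "r \<in> I" "i \<in> I" "r \<noteq> i"
    and c: "\<not> int p dvd c r"
    and g: "\<And>x x'. (\<And>j. j \<in> I - {r, i} \<Longrightarrow> x j = x' j) \<Longrightarrow> g x = g x'"
  shows "card {x \<in> solutions p I c A t. x i = g x} \<le> p ^ (card I - 2)"
proof -
  let ?S = "{x \<in> solutions p I c A t. x i = g x}"
  have inj: "inj_on (\<lambda>x. restrict x (I - {r, i})) ?S"
  proof (rule inj_onI)
    fix x x' assume x: "x \<in> ?S" and x': "x' \<in> ?S"
      and restr: "restrict x (I - {r, i}) = restrict x' (I - {r, i})"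
    have eq: "x j = x' j" if "j \<in> I - {r, i}" for j
      using fun_cong[OF restr, of j] that by simp
    then have "g x = g x'"
      by (rule g)
    then have "x i = x' i"
      using x x' by simp
    then have "x j = x' j" if "j \<in> I - {r}" for j
      using eq that by (cases "j = i") auto
    then show "x = x'"
      using solutions_eq_if_agree_off[where c = c, OF p A I(1,2) c] x x' by blast
  qed
  have image: "(\<lambda>x. restrict x (I - {r, i})) ` ?S \<subseteq> Pi\<^sub>E (I - {r, i}) (\<lambda>_. {..<p})"
  proof
    fix y assume "y \<in> (\<lambda>x. restrict x (I - {r, i})) ` ?S"
    then obtain x where x: "x \<in> solutions p I c A t" and y: "y = restrict x (I - {r, i})"
      by blast
    from x have "\<forall>j\<in>I. x j \<in> A"
      unfolding solutions_def by (simp add: PiE_iff)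
    then show "y \<in> Pi\<^sub>E (I - {r, i}) (\<lambda>_. {..<p})"
      unfolding y restrict_PiE_iff using A by auto
  qed
  have "card ?S \<le> card (Pi\<^sub>E (I - {r, i}) (\<lambda>_. {..<p}))"
    by (rule card_inj_on_le[OF inj image]) (simp add: finite_PiE I(1))
  also have "\<dots> = p ^ (card I - 2)"
    using I by (simp add: card_PiE card_Diff_subset numeral_2_eq_2)
  finally show ?thesis .
qed

lemma card_solutions_coincidence_le:
  assumes p: "prime p" and A: "A \<subseteq> {..<p}" and I: "finite I" "card I \<ge> 3" "i \<in> I"
    and m: "m \<noteq> i" and c: "\<forall>j\<in>I. \<not> int p dvd c j"
  shows "card {x \<in> solutions p I c A t. x i = override_on b x I m} \<le> p ^ (card I - 2)"
proof -
  have "card {i, m} \<le> 2"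
    by (cases "i = m") auto
  then have "\<not> I \<subseteq> {i, m}"
    using card_mono[of "{i, m}" I] I(2) by auto
  then obtain r where r: "r \<in> I" "r \<noteq> i" "r \<noteq> m"
    by blast
  show ?thesis
  proof (rule card_solutions_determined_coord_le[OF p A I(1) r(1) I(3) r(2)])
    show "\<not> int p dvd c r"
      using c r(1) by blast
    fix x x' :: "nat \<Rightarrow> nat"
    assume "\<And>j. j \<in> I - {r, i} \<Longrightarrow> x j = x' j"
    then show "override_on b x I m = override_on b x' I m"
      using r m by (cases "m \<in> I") auto
  qed
qed

lemma card_degenerate_solutions_le:
  assumes p: "prime p" and A: "A \<subseteq> {..<p}" and I: "I \<subseteq> {..<k}" "card I \<ge> 3"
    and c: "\<forall>i\<in>I. \<not> int p dvd c i"
  shows "card {x \<in> solutions p I c A t. \<exists>i\<in>I. \<exists>m<k. m \<noteq> i \<and> x i = override_on b x I m}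
    \<le> k * k * p ^ (card I - 2)"
proof -
  define Pairs where "Pairs = Sigma I (\<lambda>i. {..<k} - {i})"
  define Bad where "Bad = (\<lambda>(i, m). {x \<in> solutions p I c A t. x i = override_on b x I m})"
  have finI: "finite I"
    using I(1) finite_subset by blast
  have degenerate: "{x \<in> solutions p I c A t. \<exists>i\<in>I. \<exists>m<k. m \<noteq> i \<and> x i = override_on b x I m}
      = (\<Union>P\<in>Pairs. Bad P)"
    unfolding Pairs_def Bad_def by auto
  have card_Bad: "card (Bad P) \<le> p ^ (card I - 2)" if "P \<in> Pairs" for P
    using that card_solutions_coincidence_le[OF p A finI I(2) _ _ c]
    unfolding Pairs_def Bad_def by auto
  have "Pairs \<subseteq> {..<k} \<times> {..<k}"
    unfolding Pairs_def using I(1) by auto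
  then have card_Pairs: "card Pairs \<le> k * k"
    using card_mono[of "{..<k} \<times> {..<k}" Pairs] by (simp add: card_cartesian_product)
  have "card (\<Union>P\<in>Pairs. Bad P) \<le> (\<Sum>P\<in>Pairs. card (Bad P))"
    using finI unfolding Pairs_def by (intro card_UN_le) simp
  also have "\<dots> \<le> card Pairs * p ^ (card I - 2)"
    using sum_bounded_above[of Pairs "\<lambda>P. card (Bad P)", OF card_Bad] by simp
  also have "\<dots> \<le> k * k * p ^ (card I - 2)"
    using card_Pairs by simp
  finally show ?thesis
    unfolding degenerate .
qed

lemma card_solutions_diff_eq_sum_fourier:
  assumes "finite I" "finite A" "p > 0"
  shows "(of_nat (card (solutions p I c A 0)) - of_nat (card (solutions p I c A t))) * of_nat p
    = of_nat p ^ card I * (\<Sum>\<xi><p. (1 - add_char p (- (int \<xi> * t)))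
        * (\<Prod>i\<in>I. fourier_ind_int p A (c i * int \<xi>)))"
  unfolding left_diff_distrib card_solutions_eq_sum_fourier[OF assms]
  by (simp add: algebra_simps sum_subtractf)

lemma norm_prod_fourier_ind_int_le:
  assumes A: "A \<subseteq> {..<p}" and I: "finite I"
    and suv: "{s, u, v} \<subseteq> I" "s \<noteq> u" "s \<noteq> v" "u \<noteq> v"
  shows "norm (\<Prod>i\<in>I. fourier_ind_int p A (c i * m))
    \<le> norm (fourier_ind_int p A (c s * m))
      * (norm (fourier_ind_int p A (c u * m)) * norm (fourier_ind_int p A (c v * m)))"
proof -
  have "norm (\<Prod>i\<in>I. fourier_ind_int p A (c i * m))
      \<le> (\<Prod>i\<in>{s, u, v}. norm (fourier_ind_int p A (c i * m)))"
    unfolding prod_norm[symmetric]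
    using I suv(1) norm_fourier_ind_int_le[OF A] by (intro prod_le_prod_subset) auto
  then show ?thesis
    using suv by simp
qed

lemma card_solutions_shift_ge:
  fixes \<epsilon> :: real
  assumes p: "prime p" and A: "A \<subseteq> {..<p}" and I: "finite I"
    and suv: "{s, u, v} \<subseteq> I" "s \<noteq> u" "s \<noteq> v" "u \<noteq> v"
    and cu: "\<not> int p dvd c u" and cv: "\<not> int p dvd c v"
    and \<epsilon>: "\<And>\<xi>. \<xi> < p \<Longrightarrow>
      norm (1 - add_char p (int \<xi> * t)) * norm (fourier_ind_int p A (c s * int \<xi>)) \<le> \<epsilon>"
  shows "real (card (solutions p I c A 0)) - \<epsilon> * real p ^ (card I - 1)
    \<le> real (card (solutions p I c A t))"
proof -
  define F where "F i \<xi> = fourier_ind_int p A (c i * int \<xi>)" for i \<xi>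
  define N where "N t' = real (card (solutions p I c A t'))" for t'
  have p0: "p > 0" using p prime_gt_0_nat by blast
  have finA: "finite A" using A finite_subset by blast
  have summand: "norm ((1 - add_char p (- (int \<xi> * t))) * (\<Prod>i\<in>I. F i \<xi>))
      \<le> \<epsilon> * (norm (F u \<xi>) * norm (F v \<xi>))" if "\<xi> < p" for \<xi>
  proof -
    have "norm (\<Prod>i\<in>I. F i \<xi>) \<le> norm (F s \<xi>) * (norm (F u \<xi>) * norm (F v \<xi>))"
      unfolding F_def by (rule norm_prod_fourier_ind_int_le[OF A I suv])
    then have "norm ((1 - add_char p (- (int \<xi> * t))) * (\<Prod>i\<in>I. F i \<xi>))
        \<le> (norm (1 - add_char p (int \<xi> * t)) * norm (F s \<xi>)) * (norm (F u \<xi>) * norm (F v \<xi>))"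
      unfolding norm_mult norm_one_minus_add_char_uminus mult.assoc by (simp add: mult_left_mono)
    also have "\<dots> \<le> \<epsilon> * (norm (F u \<xi>) * norm (F v \<xi>))"
      using \<epsilon>[OF that] unfolding F_def by (simp add: mult_right_mono)
    finally show ?thesis .
  qed
  have uv: "(\<Sum>\<xi><p. norm (F u \<xi>) * norm (F v \<xi>)) \<le> 1"
  proof -
    have "real (card A) / real p \<le> 1"
      using card_mono[OF _ A] p0 by (simp add: divide_le_eq_1)
    then show ?thesis
      using sum_norm_mult_fourier_ind_int_le[OF p A cu cv] unfolding F_def by linarith
  qed
  have "(N 0 - N t) * real p \<le> norm (complex_of_real ((N 0 - N t) * real p))"
    unfolding norm_of_real by (rule abs_ge_self)
  also have "\<dots> = real p ^ card I * norm (\<Sum>\<xi><p. (1 - add_char p (- (int \<xi> * t))) * (\<Prod>i\<in>I. F i \<xi>))"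
    using card_solutions_diff_eq_sum_fourier[OF I finA p0, of c t]
    unfolding N_def F_def by (simp add: norm_mult norm_power)
  also have "\<dots> \<le> real p ^ card I * (\<Sum>\<xi><p. \<epsilon> * (norm (F u \<xi>) * norm (F v \<xi>)))"
    using summand by (intro mult_left_mono order.trans[OF norm_sum sum_mono]) auto
  also have "\<dots> \<le> real p ^ card I * \<epsilon>"
    using uv \<epsilon>[of 0] p0 by (simp add: sum_distrib_left[symmetric] mult_left_le mult_left_mono)
  finally have "(N 0 - N t) * real p \<le> (\<epsilon> * real p ^ (card I - 1)) * real p"
    using suv(1) I p0 by (cases "card I") (auto simp: algebra_simps)
  then show ?thesis
    unfolding N_def using p0 by simp
qed

lemma card_solutions_Bohr_shift_ge:
  fixes \<epsilon> \<rho> :: real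
  assumes p: "prime p" and A: "A \<subseteq> {..<p}" and I: "finite I"
    and suv: "{s, u, v} \<subseteq> I" "s \<noteq> u" "s \<noteq> v" "u \<noteq> v"
    and cu: "\<not> int p dvd c u" and cv: "\<not> int p dvd c v"
    and spectrum: "\<And>\<xi>. \<xi> < p \<Longrightarrow> \<xi> \<notin> \<Gamma> \<Longrightarrow> norm (fourier_ind_int p A (c s * int \<xi>)) < \<epsilon> / 2"
    and J: "finite J" and Bohr: "\<And>j \<xi>. j \<in> J \<Longrightarrow> \<xi> \<in> \<Gamma> \<Longrightarrow> tau_norm p ((\<xi> * b j) mod p) \<le> \<rho>"
    and radius: "2 * pi * real_of_int (\<Sum>j\<in>J. \<bar>c j\<bar>) * \<rho> \<le> \<epsilon>"
  shows "real (card (solutions p I c A 0)) - \<epsilon> * real p ^ (card I - 1)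
    \<le> real (card (solutions p I c A (\<Sum>j\<in>J. c j * int (b j))))"
proof (rule card_solutions_shift_ge[OF p A I suv cu cv])
  fix \<xi> assume "\<xi> < p"
  define t where "t = (\<Sum>j\<in>J. c j * int (b j))"
  have p0: "p > 0" using p prime_gt_0_nat by blast
  show "norm (1 - add_char p (int \<xi> * t)) * norm (fourier_ind_int p A (c s * int \<xi>)) \<le> \<epsilon>"
  proof (cases "\<xi> \<in> \<Gamma>")
    case True
    then have "norm (1 - add_char p (int \<xi> * t)) \<le> 2 * pi * real_of_int (\<Sum>j\<in>J. \<bar>c j\<bar>) * \<rho>"
      unfolding t_def using Bohr by (intro norm_one_minus_add_char_Bohr_le[OF p0 J])
    moreover have "norm (1 - add_char p (int \<xi> * t)) * norm (fourier_ind_int p A (c s * int \<xi>))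
        \<le> norm (1 - add_char p (int \<xi> * t))"
      by (rule mult_left_le[OF norm_fourier_ind_int_le[OF A] norm_ge_zero])
    ultimately show ?thesis
      using radius by linarith
  next
    case False
    have "norm (1 - add_char p (int \<xi> * t)) \<le> 2"
      using norm_triangle_ineq4[of 1 "add_char p (int \<xi> * t)"] by simp
    then have "norm (1 - add_char p (int \<xi> * t)) * norm (fourier_ind_int p A (c s * int \<xi>))
        \<le> 2 * (\<epsilon> / 2)"
      using spectrum[OF \<open>\<xi> < p\<close> False] by (intro mult_mono) auto
    then show ?thesis
      by simp
  qed
qed

lemma sum_override_on:
  assumes "finite S" "I \<subseteq> S"
  shows "(\<Sum>i\<in>S. f i (override_on b x I i)) = (\<Sum>i\<in>I. f i (x i)) + (\<Sum>i\<in>S - I. f i (b i))"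
proof -
  have "(\<Sum>i\<in>S - I. f i (override_on b x I i)) = (\<Sum>i\<in>S - I. f i (b i))"
    by (intro sum.cong refl) simp
  moreover have "(\<Sum>i\<in>I. f i (override_on b x I i)) = (\<Sum>i\<in>I. f i (x i))"
    by (intro sum.cong refl) simp
  ultimately show ?thesis
    using sum.subset_diff[OF assms(2,1), of "\<lambda>i. f i (override_on b x I i)"]
    by (simp add: add.commute)
qed

lemma inj_on_override_on:
  assumes b: "inj_on b (S - I)"
    and x: "\<And>i m. i \<in> I \<Longrightarrow> m \<in> S \<Longrightarrow> m \<noteq> i \<Longrightarrow> x i \<noteq> override_on b x I m"
  shows "inj_on (override_on b x I) S"
proof (rule inj_onI)
  fix m m' assume m: "m \<in> S" "m' \<in> S" and eq: "override_on b x I m = override_on b x I m'"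
  show "m = m'"
  proof (rule ccontr)
    assume ne: "m \<noteq> m'"
    consider "m \<in> I" | "m' \<in> I" | "m \<notin> I" "m' \<notin> I"
      by blast
    then show False
    proof cases
      case 1
      then show False
        using x[of m m'] eq m ne by simp
    next
      case 2
      then show False
        using x[of m' m] eq m ne by simp
    next
      case 3
      then have "b m = b m'"
        using eq by simp
      then show False
        using inj_onD[OF b] 3 m ne by blast
    qed
  qed
qed

lemma not_solution_free_if_many_solutions:
  assumes p: "prime p" and A: "A \<subseteq> {..<p}" and I: "I \<subseteq> {..<k}" "card I \<ge> 3"
    and c: "\<forall>i\<in>I. \<not> int p dvd c i"
    and b: "b ` ({..<k} - I) \<subseteq> A" "inj_on b ({..<k} - I)"
    and many: "k * k * p ^ (card I - 2) < card (solutions p I c A (\<Sum>j\<in>{..<k} - I. c j * int (b j)))"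
  shows "\<not> solution_free p k c A"
proof -
  define t where "t = (\<Sum>j\<in>{..<k} - I. c j * int (b j))"
  define D where
    "D = {x \<in> solutions p I c A t. \<exists>i\<in>I. \<exists>m<k. m \<noteq> i \<and> x i = override_on b x I m}"
  have "card D < card (solutions p I c A t)"
    using card_degenerate_solutions_le[OF p A I c, of t b] many unfolding D_def t_def
    by (rule le_less_trans)
  then have "D \<noteq> solutions p I c A t"
    by (metis less_irrefl)
  moreover have "D \<subseteq> solutions p I c A t"
    unfolding D_def by blast
  ultimately obtain x where x: "x \<in> solutions p I c A t" and "x \<notin> D"
    by blast
  define y where "y = override_on b x I"
  have "x i \<noteq> y m" if "i \<in> I" "m < k" "m \<noteq> i" for i m
  proof
    assume "x i = y m"
    then have "x \<in> D"
      using x that unfolding D_def y_def by auto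
    then show False
      using \<open>x \<notin> D\<close> by contradiction
  qed
  then have "inj_on y {..<k}"
    unfolding y_def using b(2) by (intro inj_on_override_on) auto
  moreover have "\<forall>i<k. y i \<in> A"
    using x b(1) unfolding y_def solutions_def by (auto simp: override_on_def PiE_iff)
  moreover have "(\<Sum>i<k. c i * int (y i)) mod int p = 0"
    using x sum_override_on[OF finite_lessThan I(1), of "\<lambda>i z. c i * int z" b x]
    unfolding y_def t_def solutions_def by simp
  ultimately have "\<exists>z. (\<forall>i<k. z i \<in> A) \<and> inj_on z {..<k} \<and> (\<Sum>i<k. c i * int (z i)) mod int p = 0"
    by (intro exI[of _ y] conjI)
  then show ?thesis
    unfolding solution_free_def by simp
qed

lemma obtain_two_other_elements:
  assumes "finite I" "card I \<ge> 3" "s \<in> I"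
  obtains u v where "{s, u, v} \<subseteq> I" "s \<noteq> u" "s \<noteq> v" "u \<noteq> v"
proof -
  have "2 \<le> card (I - {s})"
    using assms by simp
  then obtain T where T: "T \<subseteq> I - {s}" "card T = 2"
    by (rule obtain_subset_with_card_n)
  then obtain u v where "T = {u, v}" "u \<noteq> v"
    by (meson card_2_iff)
  then show ?thesis
    using that T(1) assms(3) by auto
qed

lemma square_mult_power_lt:
  fixes \<delta> :: real
  assumes "6 * real k ^ 2 < \<delta> * real p" "n \<ge> 2"
  shows "real (k * k * p ^ (n - 2)) < \<delta> / 6 * real p ^ (n - 1)"
proof -
  have "p > 0"
    using assms(1) zero_le_power2[of "real k"] by (cases "p = 0") auto
  have "n - 1 = Suc (n - 2)"
    using assms(2) by simp
  then have pow: "real p ^ (n - 1) = real p * real p ^ (n - 2)"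
    by simp
  have "real (k * k * p ^ (n - 2)) = real k ^ 2 * real p ^ (n - 2)"
    by (simp add: power2_eq_square)
  also have "\<dots> < \<delta> * real p / 6 * real p ^ (n - 2)"
    using assms(1) \<open>p > 0\<close> by (intro mult_strict_right_mono) auto
  also have "\<dots> = \<delta> / 6 * real p ^ (n - 1)"
    unfolding pow by simp
  finally show ?thesis .
qed

lemma card_inter_Bohr_set_lt:
  fixes \<delta> \<rho> :: real
  assumes p: "prime p" and A: "A \<subseteq> {..<p}" and I: "I \<subseteq> {..<k}" "card I \<ge> 3" "s \<in> I"
    and c: "\<forall>i<k. \<not> int p dvd c i"
    and free: "solution_free p k c A"
    and dense: "\<delta> * real p ^ (card I - 1) \<le> real (card (solutions p I c A 0))"
    and large_p: "6 * real k ^ 2 < \<delta> * real p"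
    and spectrum: "\<And>\<xi>. \<xi> < p \<Longrightarrow> \<xi> \<notin> \<Gamma> \<Longrightarrow> norm (fourier_ind_int p A (c s * int \<xi>)) < \<delta> / 6"
    and Bohr: "\<And>x \<xi>. x \<in> B \<Longrightarrow> \<xi> \<in> \<Gamma> \<Longrightarrow> tau_norm p ((\<xi> * x) mod p) \<le> \<rho>"
    and radius: "2 * pi * real_of_int (\<Sum>j\<in>{..<k} - I. \<bar>c j\<bar>) * \<rho> \<le> \<delta> / 3"
  shows "card (A \<inter> B) < k"
proof (rule ccontr)
  define J where "J = {..<k} - I"
  have finI: "finite I" using I(1) finite_subset by blast
  assume "\<not> card (A \<inter> B) < k"
  moreover have "card J \<le> k"
    unfolding J_def using card_mono[of "{..<k}" "{..<k} - I"] by auto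
  moreover have "finite (A \<inter> B)"
    using A finite_subset by blast
  ultimately obtain b where b: "b ` J \<subseteq> A \<inter> B" "inj_on b J"
    using card_le_inj[of J "A \<inter> B"] unfolding J_def by fastforce
  obtain u v where uv: "{s, u, v} \<subseteq> I" "s \<noteq> u" "s \<noteq> v" "u \<noteq> v"
    using obtain_two_other_elements[OF finI I(2,3)] .
  have "\<not> int p dvd c u" "\<not> int p dvd c v"
    using c uv(1) I(1) by auto
  then have "real (card (solutions p I c A 0)) - \<delta> / 3 * real p ^ (card I - 1)
      \<le> real (card (solutions p I c A (\<Sum>j\<in>J. c j * int (b j))))"
    using spectrum Bohr b(1) radius unfolding J_def
    by (intro card_solutions_Bohr_shift_ge[where \<Gamma> = \<Gamma> and \<rho> = \<rho>, OF p A finI uv]) auto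
  moreover have "0 \<le> \<delta> * real p ^ (card I - 1)"
  proof -
    have "0 < \<delta> * real p"
      using large_p zero_le_power2[of "real k"] by linarith
    then show ?thesis
      by (simp add: zero_less_mult_iff)
  qed
  ultimately have "k * k * p ^ (card I - 2) < card (solutions p I c A (\<Sum>j\<in>J. c j * int (b j)))"
    using square_mult_power_lt[OF large_p, of "card I"] I(2) dense by linarith
  moreover have "b ` J \<subseteq> A"
    using b(1) by auto
  ultimately have "\<not> solution_free p k c A"
    using not_solution_free_if_many_solutions[OF p A I(1,2)] c I(1) b(2) unfolding J_def by blast
  then show False
    using free by contradiction
qed

lemma not_int_dvd_if_abs_less:
  assumes "c \<noteq> 0" "\<bar>c\<bar> < int p"
  shows "\<not> int p dvd c"
  using dvd_imp_le_int[OF assms(1)] assms(2) by force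

lemma Bohr_radius_le:
  fixes \<delta> D :: real
  assumes "0 < \<delta>" "\<delta> \<le> 1"
  shows "2 * pi * D * (\<delta> ^ 3 / (216 * pi * D)) \<le> \<delta> / 3"
proof -
  have "\<delta> ^ 3 \<le> \<delta>"
    using assms by (simp add: power_le_one_iff power3_eq_cube mult_le_one)
  then show ?thesis
    \<comment> \<open>if D = 0 the left-hand side is 0, since x / 0 = 0\<close>
    using assms(1) by (cases "D = 0") simp_all
qed

theorem mainTheorem11:
  fixes k p s :: nat and c :: "nat \<Rightarrow> int" and I A :: "nat set" and \<delta> :: real
  assumes "k \<ge> 3"
    and "\<forall>i<k. c i \<noteq> 0"
    and "I \<subset> {..<k}" and "card I \<ge> 3"
    and "(\<Sum>i\<in>I. c i) = 0"
    and "prime p" and "\<forall>i<k. \<bar>c i\<bar> < int p"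
    and "A \<subseteq> {..<p}"
    and "solution_free p k c A"
    and "0 < \<delta>" and "\<delta> \<le> 1"
    and "real (num_solutions p I c A) \<ge> \<delta> * real p ^ (card I - 1)"
    and "s \<in> I"
    and "real p > 6 * real k ^ 2 / \<delta>"
  shows "let J = {..<k} - I;
             \<nu> = \<delta> / 6;
             L = {\<xi>\<in>{..<p}. norm (fourier_ind p A \<xi>) \<ge> \<nu>};
             \<Gamma> = {\<eta>\<in>{..<p}. nat ((c s * int \<eta>) mod int p) \<in> L};
             D = (\<Sum>i\<in>J. \<bar>c i\<bar>);
             \<rho> = \<delta> ^ 3 / (216 * pi * real_of_int D);
             B = {x\<in>{..<p}. \<forall>\<xi>\<in>\<Gamma>. tau_norm p ((\<xi> * x) mod p) \<le> \<rho>}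
         in card (A \<inter> B) < k"
proof -
  define \<Gamma> where
    "\<Gamma> = {\<eta>\<in>{..<p}. nat ((c s * int \<eta>) mod int p) \<in> {\<xi>\<in>{..<p}. norm (fourier_ind p A \<xi>) \<ge> \<delta> / 6}}"
  define \<rho> where "\<rho> = \<delta> ^ 3 / (216 * pi * real_of_int (\<Sum>i\<in>{..<k} - I. \<bar>c i\<bar>))"
  define B where "B = {x\<in>{..<p}. \<forall>\<xi>\<in>\<Gamma>. tau_norm p ((\<xi> * x) mod p) \<le> \<rho>}"
  have p0: "p > 0"
    using assms(6) prime_gt_0_nat by blast
  have "\<forall>i<k. \<not> int p dvd c i"
    using assms(2,7) not_int_dvd_if_abs_less by blast
  moreover have "6 * real k ^ 2 < \<delta> * real p"
    using assms(10,14) by (simp add: divide_less_eq mult.commute)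
  moreover have "norm (fourier_ind_int p A (c s * int \<xi>)) < \<delta> / 6" if "\<xi> < p" "\<xi> \<notin> \<Gamma>" for \<xi>
    using that p0 unfolding \<Gamma>_def by (simp add: fourier_ind_nat_mod nat_less_iff)
  moreover have "2 * pi * real_of_int (\<Sum>i\<in>{..<k} - I. \<bar>c i\<bar>) * \<rho> \<le> \<delta> / 3"
    unfolding \<rho>_def using Bohr_radius_le[OF assms(10,11)] by simp
  moreover have "\<delta> * real p ^ (card I - 1) \<le> real (card (solutions p I c A 0))"
    using assms(12) by (simp add: num_solutions_eq_card_solutions)
  moreover have "\<And>x \<xi>. x \<in> B \<Longrightarrow> \<xi> \<in> \<Gamma> \<Longrightarrow> tau_norm p ((\<xi> * x) mod p) \<le> \<rho>"
    unfolding B_def by blast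
  ultimately have "card (A \<inter> B) < k"
    using card_inter_Bohr_set_lt[OF assms(6,8) _ assms(4,13) _ assms(9)] assms(3) by blast
  then show ?thesis
    unfolding Let_def \<Gamma>_def \<rho>_def B_def .
qed

end
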